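(* Let $W'\subset S_n$ be a reflection subgroup and $u\in S_n$. Then the coset $W'u$ is diamond-closed in $S_n$.
   Context: $S_n$ is the symmetric group with length $\ell$ (w.r.t. simple reflections $s_i=(i\ i{+}1)$), and $T$ its set of transpositions. A reflection subgroup is a subgroup generated by a set of transpositions. The Bruhat graph $\Gamma$ has vertex set $S_n$ and edges $w\to tw$ whenever $t\in T$, $\ell(w)<\ell(tw)$. A diamond is a subgraph of $\Gamma$ with four distinct vertices $x_1,\dots,x_4$ and edges $x_1\to x_2\to x_4$, $x_1\to x_3\to x_4$. A set $X\subset S_n$ is diamond-closed in $S_n$ if whenever $X$ contains three vertices of a diamond it contains the fourth. *)

theory Defs
  imports "HOL-Algebra.Sym_Groups" "HOL-Algebra.Coset"
begin

text \<open>S_n is sym_group n (permutations of {1..n}, multiplication = composition).\<close>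

definition transpositions :: "nat \<Rightarrow> (nat \<Rightarrow> nat) set" where
  "transpositions n = {Transposition.transpose i j | i j. i \<in> {1..n} \<and> j \<in> {1..n} \<and> i \<noteq> j}"

definition reflection_subgroup :: "nat \<Rightarrow> (nat \<Rightarrow> nat) set \<Rightarrow> bool" where
  "reflection_subgroup n W \<longleftrightarrow> (\<exists>R. R \<subseteq> transpositions n \<and> W = generate (sym_group n) R)"

text \<open>Coxeter length w.r.t. simple reflections = number of inversions.\<close>
definition perm_length :: "nat \<Rightarrow> (nat \<Rightarrow> nat) \<Rightarrow> nat" where
  "perm_length n w = card {(i, j). i \<in> {1..n} \<and> j \<in> {1..n} \<and> i < j \<and> w i > w j}"

definition bruhat_edge :: "nat \<Rightarrow> (nat \<Rightarrow> nat) \<Rightarrow> (nat \<Rightarrow> nat) \<Rightarrow> bool" where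
  "bruhat_edge n x y \<longleftrightarrow> x \<in> carrier (sym_group n) \<and>
     (\<exists>t \<in> transpositions n. y = t \<circ> x) \<and> perm_length n x < perm_length n y"

definition diamond :: "nat \<Rightarrow> (nat \<Rightarrow> nat) \<Rightarrow> (nat \<Rightarrow> nat) \<Rightarrow> (nat \<Rightarrow> nat) \<Rightarrow> (nat \<Rightarrow> nat) \<Rightarrow> bool" where
  "diamond n x1 x2 x3 x4 \<longleftrightarrow> distinct [x1, x2, x3, x4] \<and>
     bruhat_edge n x1 x2 \<and> bruhat_edge n x2 x4 \<and> bruhat_edge n x1 x3 \<and> bruhat_edge n x3 x4"

definition diamond_closed :: "nat \<Rightarrow> (nat \<Rightarrow> nat) set \<Rightarrow> bool" where
  "diamond_closed n X \<longleftrightarrow> (\<forall>x1 x2 x3 x4. diamond n x1 x2 x3 x4 \<longrightarrow>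
     card ({x1, x2, x3, x4} \<inter> X) \<ge> 3 \<longrightarrow> {x1, x2, x3, x4} \<subseteq> X)"

end

theory Submission
  imports Defs
begin

text \<open>Left multiplication by a transposition t maps an element of the coset W u into W u iff
  t \<in> W. A diamond is a square x1 - x2 - x4 - x3 whose edges are labelled by transpositions.
  If three of its vertices lie in W u, the two edges between them carry labels a \<noteq> b in W.
  Going around the square, the labels c, d of the other two edges satisfy b a = d c, and the
  only ways to write the product of two distinct transpositions a, b as d c with transpositions
  c, d have c \<in> {a, b, a b a}. Hence c \<in> W and the fourth vertex lies in W u as well.\<close>

lemma transpose_eq_transpose_iff:
  assumes "a \<noteq> b"
  shows "Transposition.transpose a b = Transposition.transpose c d \<longleftrightarrow>
    (a = c \<and> b = d) \<or> (a = d \<and> b = c)"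
proof
  assume "Transposition.transpose a b = Transposition.transpose c d"
  then have "Transposition.transpose c d a = b" "Transposition.transpose c d b = a"
    by (metis transpose_apply_first transpose_apply_second)+
  then show "(a = c \<and> b = d) \<or> (a = d \<and> b = c)"
    using assms by (auto simp: transpose_eq_iff)
qed (auto simp: transpose_commute)

lemma transpose_conjugate:
  "Transposition.transpose a b \<circ> Transposition.transpose c d \<circ> Transposition.transpose a b
   = Transposition.transpose (Transposition.transpose a b c) (Transposition.transpose a b d)"
  by (auto simp: fun_eq_iff transpose_def)

lemma transpose_comp_factor_cases:
  fixes a1 a2 b1 b2 c1 c2 d1 d2 :: 'a
  assumes "a1 \<noteq> a2" "b1 \<noteq> b2" "c1 \<noteq> c2"
    and prod: "Transposition.transpose b1 b2 \<circ> Transposition.transpose a1 a2 =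
      Transposition.transpose d1 d2 \<circ> Transposition.transpose c1 c2"
    and ne: "Transposition.transpose a1 a2 \<noteq> Transposition.transpose b1 b2"
  shows "Transposition.transpose c1 c2 \<in> {Transposition.transpose a1 a2, Transposition.transpose b1 b2,
    Transposition.transpose a1 a2 \<circ> Transposition.transpose b1 b2 \<circ> Transposition.transpose a1 a2}"
  \<comment> \<open>The product is a 3-cycle or a double transposition; comparing both sides at the
    (at most eight) points involved leaves only the listed factors.\<close>
proof -
  have pt: "Transposition.transpose b1 b2 (Transposition.transpose a1 a2 p) =
      Transposition.transpose d1 d2 (Transposition.transpose c1 c2 p)" for p
    using prod by (metis comp_apply)
  have "\<not> ((a1 = b1 \<and> a2 = b2) \<or> (a1 = b2 \<and> a2 = b1))"
    using ne by (auto simp: transpose_commute)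
  moreover have "Transposition.transpose a1 a2 b1 \<noteq> Transposition.transpose a1 a2 b2"
    using \<open>b1 \<noteq> b2\<close> by (auto simp: transpose_def)
  ultimately show ?thesis
    using pt[of a1] pt[of a2] pt[of b1] pt[of b2] pt[of c1] pt[of c2] pt[of d1] pt[of d2] assms(1-3)
    unfolding transpose_conjugate insert_iff empty_iff
      transpose_eq_transpose_iff[OF \<open>c1 \<noteq> c2\<close>]
    unfolding transpose_def
    by smt
qed

lemma (in group) r_coset_mult_mem_iff:
  assumes "subgroup H G" "u \<in> carrier G" "x \<in> H #> u" "t \<in> carrier G"
  shows "t \<otimes> x \<in> H #> u \<longleftrightarrow> t \<in> H"
proof -
  have x: "x \<in> carrier G"
    using subgroup.elemrcos_carrier[OF assms(1) is_group assms(2,3)] .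
  have "H #> u = H #> x"
    using repr_independence[OF assms(3,2,1)] .
  also have "t \<otimes> x \<in> H #> x \<longleftrightarrow> t \<otimes> x \<otimes> inv x \<in> H"
    using assms(4) x by (intro subgroup.rcos_module[OF assms(1) is_group x]) simp
  also have "t \<otimes> x \<otimes> inv x = t"
    using assms(4) x by (simp add: m_assoc)
  finally show ?thesis .
qed

lemma transposition_in_sym_group: "t \<in> transpositions n \<Longrightarrow> t \<in> carrier (sym_group n)"
  unfolding transpositions_def sym_group_carrier by (auto intro: permutes_swap_id)

lemma transpositions_factor_cases:
  assumes "ta \<in> transpositions n" "tb \<in> transpositions n" "tc \<in> transpositions n"
    and "td \<in> transpositions n" "tb \<circ> ta = td \<circ> tc" "ta \<noteq> tb"
  shows "tc \<in> {ta, tb, ta \<circ> tb \<circ> ta}"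
proof -
  obtain a1 a2 where a: "ta = Transposition.transpose a1 a2" "a1 \<noteq> a2"
    using assms(1) unfolding transpositions_def by blast
  obtain b1 b2 where b: "tb = Transposition.transpose b1 b2" "b1 \<noteq> b2"
    using assms(2) unfolding transpositions_def by blast
  obtain c1 c2 where c: "tc = Transposition.transpose c1 c2" "c1 \<noteq> c2"
    using assms(3) unfolding transpositions_def by blast
  obtain d1 d2 where d: "td = Transposition.transpose d1 d2"
    using assms(4) unfolding transpositions_def by blast
  show ?thesis
    using assms(5,6) unfolding a(1) b(1) c(1) d(1)
    by (rule transpose_comp_factor_cases[OF a(2) b(2) c(2)])
qed

definition transp_adjacent :: "nat \<Rightarrow> (nat \<Rightarrow> nat) \<Rightarrow> (nat \<Rightarrow> nat) \<Rightarrow> bool" where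
  "transp_adjacent n x y \<longleftrightarrow> (\<exists>t \<in> transpositions n. y = t \<circ> x)"

lemma transp_adjacent_sym:
  assumes "transp_adjacent n x y"
  shows "transp_adjacent n y x"
proof -
  obtain t where "t \<in> transpositions n" "y = t \<circ> x"
    using assms unfolding transp_adjacent_def by blast
  moreover have "t \<circ> t = id"
    using \<open>t \<in> transpositions n\<close> unfolding transpositions_def by auto
  ultimately have "x = t \<circ> y"
    by (metis comp_assoc id_comp)
  with \<open>t \<in> transpositions n\<close> show ?thesis
    unfolding transp_adjacent_def by blast
qed

lemma bruhat_edge_imp_transp_adjacent: "bruhat_edge n x y \<Longrightarrow> transp_adjacent n x y"
  unfolding bruhat_edge_def transp_adjacent_def by blast

context
  fixes n :: nat and W :: "(nat \<Rightarrow> nat) set" and u :: "nat \<Rightarrow> nat"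
  assumes W: "subgroup W (sym_group n)" and u: "u \<in> carrier (sym_group n)"
begin

lemma coset_transposition_mult_iff:
  assumes "x \<in> W #>\<^bsub>sym_group n\<^esub> u" "t \<in> transpositions n"
  shows "t \<circ> x \<in> W #>\<^bsub>sym_group n\<^esub> u \<longleftrightarrow> t \<in> W"
  using group.r_coset_mult_mem_iff[OF sym_group_is_group W u assms(1)]
    transposition_in_sym_group[OF assms(2)]
  by (simp add: sym_group_mult)

lemma coset_square_closed:
  assumes in_coset: "y\<^sub>0 \<in> W #>\<^bsub>sym_group n\<^esub> u" "y\<^sub>1 \<in> W #>\<^bsub>sym_group n\<^esub> u"
      "y\<^sub>2 \<in> W #>\<^bsub>sym_group n\<^esub> u"
    and adjacent: "transp_adjacent n y\<^sub>0 y\<^sub>1" "transp_adjacent n y\<^sub>1 y\<^sub>2"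
      "transp_adjacent n y\<^sub>0 y\<^sub>3" "transp_adjacent n y\<^sub>3 y\<^sub>2"
    and "y\<^sub>0 \<noteq> y\<^sub>2"
  shows "y\<^sub>3 \<in> W #>\<^bsub>sym_group n\<^esub> u"
proof -
  obtain s\<^sub>0 s\<^sub>1 s\<^sub>2 s\<^sub>3 where
    s: "s\<^sub>0 \<in> transpositions n" "s\<^sub>1 \<in> transpositions n" "s\<^sub>2 \<in> transpositions n"
      "s\<^sub>3 \<in> transpositions n"
    and y: "y\<^sub>1 = s\<^sub>0 \<circ> y\<^sub>0" "y\<^sub>2 = s\<^sub>1 \<circ> y\<^sub>1" "y\<^sub>3 = s\<^sub>3 \<circ> y\<^sub>0" "y\<^sub>2 = s\<^sub>2 \<circ> y\<^sub>3"
    using adjacent unfolding transp_adjacent_def by metis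
  have "s\<^sub>0 \<in> W" "s\<^sub>1 \<in> W"
    using in_coset s y coset_transposition_mult_iff by blast+
  have "y\<^sub>0 \<in> carrier (sym_group n)"
    using in_coset(1) subgroup.elemrcos_carrier[OF W sym_group_is_group u] by blast
  then have "surj y\<^sub>0"
    unfolding sym_group_carrier by (rule permutes_surj)
  moreover have "(s\<^sub>1 \<circ> s\<^sub>0) \<circ> y\<^sub>0 = (s\<^sub>2 \<circ> s\<^sub>3) \<circ> y\<^sub>0"
    using y by (simp add: comp_assoc)
  ultimately have "s\<^sub>1 \<circ> s\<^sub>0 = s\<^sub>2 \<circ> s\<^sub>3"
    by (intro surj_fun_eq[of y\<^sub>0 UNIV]) auto
  moreover have "s\<^sub>0 \<noteq> s\<^sub>1"
    using \<open>y\<^sub>0 \<noteq> y\<^sub>2\<close> s y unfolding transpositions_def by auto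
  ultimately have "s\<^sub>3 \<in> {s\<^sub>0, s\<^sub>1, s\<^sub>0 \<circ> s\<^sub>1 \<circ> s\<^sub>0}"
    using transpositions_factor_cases s by blast
  then have "s\<^sub>3 \<in> W"
    using \<open>s\<^sub>0 \<in> W\<close> \<open>s\<^sub>1 \<in> W\<close> subgroup.m_closed[OF W] by (auto simp: sym_group_mult)
  then show ?thesis
    using in_coset(1) s(4) y(3) coset_transposition_mult_iff by blast
qed

end

lemma three_of_four_mem:
  assumes "3 \<le> card ({a, b, c, d} \<inter> X)" "v \<in> {a, b, c, d}" "v \<notin> X"
  shows "{a, b, c, d} - {v} \<subseteq> X"
proof
  fix w assume w: "w \<in> {a, b, c, d} - {v}"
  show "w \<in> X"
  proof (rule ccontr)
    assume "w \<notin> X"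
    then have "{a, b, c, d} \<inter> X \<subseteq> {a, b, c, d} - {v, w}"
      using assms(3) by blast
    then have "card ({a, b, c, d} \<inter> X) \<le> card ({a, b, c, d} - {v, w})"
      by (intro card_mono) auto
    also have "\<dots> \<le> 2"
      using assms(2) w by (auto simp: card_Diff_subset card_insert_if)
    finally show False using assms(1) by simp
  qed
qed

lemma subgroup_coset_diamond_closed:
  assumes "subgroup W (sym_group n)" "u \<in> carrier (sym_group n)"
  shows "diamond_closed n (W #>\<^bsub>sym_group n\<^esub> u)"
  unfolding diamond_closed_def
proof (intro allI impI)
  fix x\<^sub>1 x\<^sub>2 x\<^sub>3 x\<^sub>4
  let ?X = "W #>\<^bsub>sym_group n\<^esub> u"
  assume diamond: "diamond n x\<^sub>1 x\<^sub>2 x\<^sub>3 x\<^sub>4" and three: "3 \<le> card ({x\<^sub>1, x\<^sub>2, x\<^sub>3, x\<^sub>4} \<inter> ?X)"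
  then have distinct: "distinct [x\<^sub>1, x\<^sub>2, x\<^sub>3, x\<^sub>4]"
    unfolding diamond_def by blast
  have edges: "transp_adjacent n x\<^sub>1 x\<^sub>2" "transp_adjacent n x\<^sub>2 x\<^sub>4"
      "transp_adjacent n x\<^sub>1 x\<^sub>3" "transp_adjacent n x\<^sub>3 x\<^sub>4"
    using diamond bruhat_edge_imp_transp_adjacent unfolding diamond_def by blast+
  note adjacent = edges edges[THEN transp_adjacent_sym]
  show "{x\<^sub>1, x\<^sub>2, x\<^sub>3, x\<^sub>4} \<subseteq> ?X"
  proof (rule ccontr)
    assume "\<not> {x\<^sub>1, x\<^sub>2, x\<^sub>3, x\<^sub>4} \<subseteq> ?X"
    then obtain v where v: "v \<in> {x\<^sub>1, x\<^sub>2, x\<^sub>3, x\<^sub>4}" "v \<notin> ?X"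
      by blast
    then have others: "{x\<^sub>1, x\<^sub>2, x\<^sub>3, x\<^sub>4} - {v} \<subseteq> ?X"
      using three by (intro three_of_four_mem)
    note square = coset_square_closed[OF assms]
    from v(1) have "v \<in> ?X"
    proof (elim insertE emptyE)
      assume "v = x\<^sub>1"
      with others show ?thesis
        using square[of x\<^sub>2 x\<^sub>4 x\<^sub>3 x\<^sub>1] adjacent distinct by auto
    next
      assume "v = x\<^sub>2"
      with others show ?thesis
        using square[of x\<^sub>1 x\<^sub>3 x\<^sub>4 x\<^sub>2] adjacent distinct by auto
    next
      assume "v = x\<^sub>3"
      with others show ?thesis
        using square[of x\<^sub>1 x\<^sub>2 x\<^sub>4 x\<^sub>3] adjacent distinct by auto
    next
      assume "v = x\<^sub>4"
      with others show ?thesis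
        using square[of x\<^sub>2 x\<^sub>1 x\<^sub>3 x\<^sub>4] adjacent distinct by auto
    qed
    with v(2) show False ..
  qed
qed

theorem lemma4p3:
  fixes n :: nat and W :: "(nat \<Rightarrow> nat) set" and u :: "nat \<Rightarrow> nat"
  assumes "reflection_subgroup n W"
    and "u \<in> carrier (sym_group n)"
  shows "diamond_closed n (W #>\<^bsub>sym_group n\<^esub> u)"
proof -
  obtain R where "R \<subseteq> transpositions n" "W = generate (sym_group n) R"
    using assms(1) unfolding reflection_subgroup_def by blast
  then have "subgroup W (sym_group n)"
    using group.generate_is_subgroup[OF sym_group_is_group] transposition_in_sym_group by blast
  then show ?thesis
    using assms(2) by (rule subgroup_coset_diamond_closed)
qed

end
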